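(* Let $\alpha=[a_0;a_1,a_2,\dots]$ be irrational with convergents $p_k/q_k$. For integers $k \ge 1$ and $0 \le M <q_k$ let \[ B_{k,M}^*(x)= \log \frac{P_M^* (\alpha , (-1)^k x/q_k)}{P_M^* (p_k/q_k , (-1)^kx/q_k)} - \sum_{\substack{1 \le n \le M, \\ n \ne q_{k-1},\ n\ne q_k-q_{k-1}}} \sin (\pi n\| q_k \alpha \| /q_k) \cot \left( \pi \frac{n(-1)^k p_k+x}{q_k} \right) , \] where for $\beta\in\{\alpha,p_k/q_k\}$, \[ P_M^*(\beta , y) = \prod_{\substack{1 \le n \le M, \\ n \ne q_{k-1},\ n\ne q_k-q_{k-1}}} |2 \sin (\pi (n \beta + y))| . \] Let $k \ge 1$ and $0 \le M < q_k$, and assume that $q_k \| q_k \alpha \| \le 2(1-c_k)$ and $-2<x \le 2-\frac{q_k \| q_k \alpha \|}{1-c_k}$ with some $c_k$ such that $100/q_k^2 \le c_k<1$. Then \[ -C \frac{\log (4/c_k)}{(2-|x|)^2 a_{k+1}^2} \le B_{k,M}^*(x) \le C \frac{1}{a_{k+1}^2 q_k} \] with a universal constant $C>0$.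
   Context: $p_k/q_k=[a_0;a_1,\dots,a_k]$ are the convergents of $\alpha$ (with $q_{0}=1$); $\|y\|$ is distance to nearest integer. *)

theory Defs
  imports Complex_Main
begin

fun cf_rest :: "real \<Rightarrow> nat \<Rightarrow> real" where
  "cf_rest \<alpha> 0 = \<alpha>"
| "cf_rest \<alpha> (Suc k) = 1 / (cf_rest \<alpha> k - of_int \<lfloor>cf_rest \<alpha> k\<rfloor>)"

definition cf_a :: "real \<Rightarrow> nat \<Rightarrow> int" where
  "cf_a \<alpha> k = \<lfloor>cf_rest \<alpha> k\<rfloor>"

fun cf_p :: "real \<Rightarrow> nat \<Rightarrow> int" where
  "cf_p \<alpha> 0 = cf_a \<alpha> 0"
| "cf_p \<alpha> (Suc 0) = cf_a \<alpha> 1 * cf_a \<alpha> 0 + 1"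
| "cf_p \<alpha> (Suc (Suc k)) = cf_a \<alpha> (Suc (Suc k)) * cf_p \<alpha> (Suc k) + cf_p \<alpha> k"

fun cf_q :: "real \<Rightarrow> nat \<Rightarrow> int" where
  "cf_q \<alpha> 0 = 1"
| "cf_q \<alpha> (Suc 0) = cf_a \<alpha> 1"
| "cf_q \<alpha> (Suc (Suc k)) = cf_a \<alpha> (Suc (Suc k)) * cf_q \<alpha> (Suc k) + cf_q \<alpha> k"

definition dist_int :: "real \<Rightarrow> real" where
  "dist_int y = \<bar>y - of_int (round y)\<bar>"

definition idx_set :: "real \<Rightarrow> nat \<Rightarrow> nat \<Rightarrow> nat set" where
  "idx_set \<alpha> k M = {n \<in> {1..M}. int n \<noteq> cf_q \<alpha> (k - 1) \<and> int n \<noteq> cf_q \<alpha> k - cf_q \<alpha> (k - 1)}"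

definition Pstar :: "real \<Rightarrow> nat \<Rightarrow> nat \<Rightarrow> real \<Rightarrow> real \<Rightarrow> real" where
  "Pstar \<alpha> k M \<beta> y = (\<Prod>n\<in>idx_set \<alpha> k M. \<bar>2 * sin (pi * (real n * \<beta> + y))\<bar>)"

definition Bstar :: "real \<Rightarrow> nat \<Rightarrow> nat \<Rightarrow> real \<Rightarrow> real" where
  "Bstar \<alpha> k M x =
     (let p = cf_p \<alpha> k; q = cf_q \<alpha> k; y = (-1) ^ k * x / of_int q in
      ln (Pstar \<alpha> k M \<alpha> y / Pstar \<alpha> k M (of_int p / of_int q) y)
      - (\<Sum>n\<in>idx_set \<alpha> k M.
           sin (pi * real n * dist_int (of_int q * \<alpha>) / of_int q)
           * cot (pi * (real n * (-1) ^ k * of_int p + x) / of_int q)))"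

end

theory Submission
  imports Defs
begin

(* Let r_n be the residue of (-1)^k p_k n modulo q_k. Since q_k alpha - p_k = (-1)^k ||q_k alpha||,
   the n-th factors of P*_M(alpha, y) and P*_M(p_k/q_k, y) at y = (-1)^k x / q_k are
   |2 sin (A_n + h_n)| and |2 sin A_n|, where A_n = pi (r_n + x) / q_k and h_n = pi n ||q_k alpha|| / q_k,
   and the n-th cotangent term is sin h_n cot A_n. So B* is the sum of the defects
   F(A_n, h_n), F(A, h) = ln (sin (A + h) / sin A) - sin h cot A.

   As (-1)^k p_k q_(k-1) = -1 mod q_k, the map n -> r_n is injective on [1, q_k), never 0 there,
   and the two excluded indices are exactly those with r_n = 1 and r_n = q_k - 1. Hence the r_n
   are distinct integers in [2, q_k - 2], and A_n, pi - A_n are at least pi (2 - |x|) / q_k.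
   From ln v <= v - 1 we get F <= 0, so in fact B* <= 0. For the lower bound,
   F(A, h) >= -(h^2/2 + 12 ln (4/c) ((h/A)^2 + (h/(pi - A))^2)): by a second-order estimate when
   sin (A + h) >= sin A / 2, and otherwise because concavity of sine forces sin (A + h) >= c sin A.
   Summing over the distinct r_n with sum_j 1/(j + d)^2 <= 1/d^2 + 2, and using
   q_k ||q_k alpha|| <= 1/a_(k+1), gives the claim with C = 920. *)

section \<open>Continued fractions\<close>

declare cf_rest.simps(2)[simp del] cf_p.simps(3)[simp del] cf_q.simps(3)[simp del]

lemma cf_rest_not_Rats: "\<alpha> \<notin> \<rat> \<Longrightarrow> cf_rest \<alpha> k \<notin> \<rat>"
proof (induction k)
  case (Suc k)
  let ?r = "cf_rest \<alpha> k"
  show ?case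
  proof
    assume "cf_rest \<alpha> (Suc k) \<in> \<rat>"
    then have "1 / cf_rest \<alpha> (Suc k) \<in> \<rat>"
      by simp
    then have "?r - of_int \<lfloor>?r\<rfloor> \<in> \<rat>"
      by (simp add: cf_rest.simps)
    then have "?r - of_int \<lfloor>?r\<rfloor> + of_int \<lfloor>?r\<rfloor> \<in> \<rat>"
      by (rule Rats_add) simp
    with Suc show False
      by simp
  qed
qed simp

lemma cf_rest_frac_pos:
  assumes "\<alpha> \<notin> \<rat>"
  shows "cf_rest \<alpha> k - of_int (cf_a \<alpha> k) > 0"
proof -
  have "cf_rest \<alpha> k \<noteq> of_int (cf_a \<alpha> k)"
    using cf_rest_not_Rats[OF assms, of k] by auto
  moreover have "of_int (cf_a \<alpha> k) \<le> cf_rest \<alpha> k"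
    unfolding cf_a_def by simp
  ultimately show ?thesis
    by simp
qed

lemma cf_rest_eq: "\<alpha> \<notin> \<rat> \<Longrightarrow> cf_rest \<alpha> k = of_int (cf_a \<alpha> k) + 1 / cf_rest \<alpha> (Suc k)"
  using cf_rest_frac_pos[of \<alpha> k] by (simp add: cf_a_def cf_rest.simps)

lemma cf_rest_Suc_gt_1: "\<alpha> \<notin> \<rat> \<Longrightarrow> cf_rest \<alpha> (Suc k) > 1"
proof -
  assume "\<alpha> \<notin> \<rat>"
  moreover have "cf_rest \<alpha> k - of_int (cf_a \<alpha> k) < 1"
    unfolding cf_a_def by linarith
  ultimately show ?thesis
    using cf_rest_frac_pos[of \<alpha> k] by (simp add: cf_rest.simps cf_a_def less_divide_eq)
qed

lemma cf_a_pos: "\<alpha> \<notin> \<rat> \<Longrightarrow> k \<ge> 1 \<Longrightarrow> cf_a \<alpha> k \<ge> 1"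
  using cf_rest_Suc_gt_1[of \<alpha> "k - 1"] by (simp add: cf_a_def le_floor_iff)

lemma cf_q_pos: "\<alpha> \<notin> \<rat> \<Longrightarrow> cf_q \<alpha> k \<ge> 1"
proof (induction \<alpha> k rule: cf_q.induct)
  case (3 \<alpha> k)
  have "cf_a \<alpha> (Suc (Suc k)) * cf_q \<alpha> (Suc k) \<ge> 1"
    using 3 cf_a_pos[of \<alpha> "Suc (Suc k)"] mult_mono[of 1 _ 1 "cf_q \<alpha> (Suc k)"] by simp
  with 3 show ?case by (simp add: cf_q.simps)
qed (auto intro: cf_a_pos)

lemma cf_q_le_Suc: "\<alpha> \<notin> \<rat> \<Longrightarrow> cf_q \<alpha> k \<le> cf_q \<alpha> (Suc k)"
proof (cases k)
  case (Suc j)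
  assume irrat: "\<alpha> \<notin> \<rat>"
  have "cf_q \<alpha> k \<le> cf_a \<alpha> (Suc k) * cf_q \<alpha> k"
    using cf_a_pos[OF irrat, of "Suc k"] cf_q_pos[OF irrat, of k] by simp
  with Suc cf_q_pos[OF irrat, of j] show ?thesis by (simp add: cf_q.simps)
qed (simp add: cf_a_pos)

lemma cf_det: "cf_p \<alpha> (Suc j) * cf_q \<alpha> j - cf_p \<alpha> j * cf_q \<alpha> (Suc j) = (-1) ^ j"
proof (induction j)
  case (Suc j)
  then show ?case by (simp add: cf_p.simps cf_q.simps algebra_simps)
qed (simp add: algebra_simps)

lemma cf_recurrence_step:
  fixes \<alpha> a t P1 P0 Q1 Q0 :: real
  assumes "t \<noteq> 0" "\<alpha> * (Q1 * (a + 1 / t) + Q0) = P1 * (a + 1 / t) + P0"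
  shows "\<alpha> * ((a * Q1 + Q0) * t + Q1) = (a * P1 + P0) * t + P1"
proof -
  have shift: "(a * X1 + X0) * t + X1 = t * (X1 * (a + 1 / t) + X0)" for X1 X0
    using assms(1) by (simp add: distrib_left distrib_right)
  show ?thesis
    unfolding shift using assms(2) by simp
qed

lemma cf_convergent_eq:
  assumes irrat: "\<alpha> \<notin> \<rat>"
  shows "\<alpha> * (of_int (cf_q \<alpha> (Suc j)) * cf_rest \<alpha> (Suc (Suc j)) + of_int (cf_q \<alpha> j))
       = of_int (cf_p \<alpha> (Suc j)) * cf_rest \<alpha> (Suc (Suc j)) + of_int (cf_p \<alpha> j)"
proof -
  have rest_eq: "cf_rest \<alpha> (Suc i) = of_int (cf_a \<alpha> (Suc i)) + 1 / cf_rest \<alpha> (Suc (Suc i))"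
    and rest_ne_0: "cf_rest \<alpha> (Suc i) \<noteq> 0" for i
    using cf_rest_eq[OF irrat, of "Suc i"] cf_rest_Suc_gt_1[OF irrat, of i] by auto
  show ?thesis
  proof (induction j)
    case 0
    \<comment> \<open>The recurrence step from the virtual convergent \<open>p_(-1) / q_(-1) = 1 / 0\<close>.\<close>
    have "cf_rest \<alpha> 0 * cf_rest \<alpha> (Suc 0) = of_int (cf_a \<alpha> 0) * cf_rest \<alpha> (Suc 0) + 1"
      unfolding cf_rest_eq[OF irrat, of 0] using rest_ne_0[of 0] by (simp add: distrib_right)
    then have "\<alpha> * (1 * cf_rest \<alpha> (Suc 0) + 0) = of_int (cf_a \<alpha> 0) * cf_rest \<alpha> (Suc 0) + 1"
      by simp
    from cf_recurrence_step[OF rest_ne_0[of "Suc 0"] this[unfolded rest_eq[of 0]]]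
    show ?case by (simp add: One_nat_def)
  next
    case (Suc j)
    from cf_recurrence_step[OF rest_ne_0 Suc[unfolded rest_eq[of "Suc j"]]]
    show ?case by (simp add: cf_p.simps cf_q.simps)
  qed
qed

lemma dist_int_eq_abs: "\<bar>y - of_int m\<bar> < 1 / 2 \<Longrightarrow> dist_int y = \<bar>y - of_int m\<bar>"
  unfolding dist_int_def using round_unique' by metis

context
  fixes \<alpha> :: real and j :: nat
  assumes irrat: "\<alpha> \<notin> \<rat>"
begin

private abbreviation (input) "q \<equiv> real_of_int (cf_q \<alpha> (Suc j))"
private abbreviation (input) "p \<equiv> real_of_int (cf_p \<alpha> (Suc j))"
private abbreviation (input) "E \<equiv> q * cf_rest \<alpha> (Suc (Suc j)) + of_int (cf_q \<alpha> j)"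

lemma cf_q_mul_sub_cf_p_eq: "(q * \<alpha> - p) * E = (-1) ^ Suc j"
proof -
  have "(q * \<alpha> - p) * E = q * (\<alpha> * E) - p * E"
    by (simp add: algebra_simps)
  also have "\<dots> = - (p * of_int (cf_q \<alpha> j) - of_int (cf_p \<alpha> j) * q)"
    unfolding cf_convergent_eq[OF irrat] by (simp add: algebra_simps)
  also have "\<dots> = (-1) ^ Suc j"
    using arg_cong[OF cf_det[of \<alpha> j], of real_of_int] by simp
  finally show ?thesis .
qed

lemma cf_denominator_gt_2: "E > 2"
proof -
  have "q \<ge> 1" "real_of_int (cf_q \<alpha> j) \<ge> 1"
    using cf_q_pos[OF irrat] by simp_all
  moreover have t: "cf_rest \<alpha> (Suc (Suc j)) > 1"
    using cf_rest_Suc_gt_1[OF irrat] .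
  ultimately have "1 * cf_rest \<alpha> (Suc (Suc j)) \<le> q * cf_rest \<alpha> (Suc (Suc j))"
    by (intro mult_right_mono) auto
  with t \<open>real_of_int (cf_q \<alpha> j) \<ge> 1\<close> show ?thesis
    by linarith
qed

lemma dist_int_cf_q: "dist_int (q * \<alpha>) = 1 / E"
proof -
  have "\<bar>q * \<alpha> - p\<bar> * E = 1"
    using arg_cong[OF cf_q_mul_sub_cf_p_eq, of abs] cf_denominator_gt_2 by (simp add: abs_mult)
  then have "\<bar>q * \<alpha> - p\<bar> = 1 / E"
    using cf_denominator_gt_2 by (intro eq_divide_imp) auto
  with cf_denominator_gt_2 show ?thesis
    using dist_int_eq_abs[of "q * \<alpha>" "cf_p \<alpha> (Suc j)"] by simp
qed

lemma cf_q_mul_sub_cf_p: "q * \<alpha> - p = (-1) ^ Suc j * dist_int (q * \<alpha>)"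
proof -
  have "q * \<alpha> - p = (-1) ^ Suc j / E"
    using cf_q_mul_sub_cf_p_eq cf_denominator_gt_2 by (intro eq_divide_imp) auto
  then show ?thesis
    unfolding dist_int_cf_q by simp
qed

lemma dist_int_cf_q_pos: "dist_int (q * \<alpha>) > 0"
  using cf_denominator_gt_2 unfolding dist_int_cf_q by simp

lemma dist_int_cf_q_mult_cf_a_le: "dist_int (q * \<alpha>) * q * of_int (cf_a \<alpha> (Suc (Suc j))) \<le> 1"
proof -
  have "of_int (cf_a \<alpha> (Suc (Suc j))) \<le> cf_rest \<alpha> (Suc (Suc j))"
    unfolding cf_a_def by simp
  then have "q * of_int (cf_a \<alpha> (Suc (Suc j))) \<le> q * cf_rest \<alpha> (Suc (Suc j))"
    using cf_q_pos[OF irrat, of "Suc j"] by (intro mult_left_mono) auto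
  moreover have "real_of_int (cf_q \<alpha> j) \<ge> 0"
    using cf_q_pos[OF irrat, of j] by simp
  ultimately have "q * of_int (cf_a \<alpha> (Suc (Suc j))) \<le> E"
    by linarith
  with cf_denominator_gt_2 show ?thesis
    unfolding dist_int_cf_q by (simp add: field_simps)
qed

end

section \<open>Multiplication by a unit modulo \<open>q\<close>\<close>

lemma dvd_abs_less_imp_eq_0: "Q dvd a \<Longrightarrow> \<bar>a\<bar> < Q \<Longrightarrow> a = (0::int)"
  using dvd_imp_le_int[of a Q] by fastforce

context
  fixes Q u v :: int
  assumes inverse: "Q dvd u * v + 1"
begin

lemma dvd_of_dvd_mult_inverse: "Q dvd u * z \<Longrightarrow> Q dvd z"
proof -
  assume "Q dvd u * z"
  then have "Q dvd (u * v + 1) * z - v * (u * z)"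
    using inverse by (intro dvd_diff) auto
  also have "(u * v + 1) * z - v * (u * z) = z"
    by (simp add: algebra_simps)
  finally show "Q dvd z" .
qed

lemma mod_mult_inverse_eq_imp_eq:
  assumes "(u * z) mod Q = (u * w) mod Q" "\<bar>z - w\<bar> < Q"
  shows "z = w"
proof -
  have "Q dvd u * (z - w)"
    using assms(1) by (simp add: mod_eq_dvd_iff right_diff_distrib)
  then show ?thesis
    using dvd_abs_less_imp_eq_0[OF dvd_of_dvd_mult_inverse assms(2)] by simp
qed

lemma inj_on_mod_mult_inverse: "inj_on (\<lambda>z. (u * z) mod Q) {1..<Q}"
proof (rule inj_onI)
  fix z w assume "z \<in> {1..<Q}" "w \<in> {1..<Q}" "(u * z) mod Q = (u * w) mod Q"
  then show "z = w"
    using mod_mult_inverse_eq_imp_eq[of z w] by auto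
qed

lemma mod_mult_inverse_bounds:
  assumes v: "1 \<le> v" "v \<le> Q" and z: "1 \<le> z" "z < Q" "z \<noteq> v" "z \<noteq> Q - v"
  shows "2 \<le> (u * z) mod Q \<and> (u * z) mod Q \<le> Q - 2"
proof -
  have "Q dvd Q * u - (u * v + 1)"
    using inverse by (intro dvd_diff) auto
  also have "Q * u - (u * v + 1) = u * (Q - v) - 1"
    by (simp add: algebra_simps)
  finally have "(u * (Q - v)) mod Q = 1 mod Q"
    unfolding mod_eq_dvd_iff .
  then have "(u * (Q - v)) mod Q = 1"
    using z by (simp add: mod_pos_pos_trivial)
  moreover have "(u * v) mod Q = Q - 1"
    using inverse z zmod_minus1[of Q] mod_eq_dvd_iff[of "u * v" Q "- 1"] by simp
  moreover have "(u * z) mod Q \<noteq> (u * w) mod Q" if "w \<in> {0, Q - v, v}" for w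
  proof
    assume "(u * z) mod Q = (u * w) mod Q"
    moreover have "\<bar>z - w\<bar> < Q"
      using that v z by auto
    ultimately have "z = w"
      by (rule mod_mult_inverse_eq_imp_eq)
    with that z show False
      by auto
  qed
  ultimately have "(u * z) mod Q \<noteq> 0" "(u * z) mod Q \<noteq> 1" "(u * z) mod Q \<noteq> Q - 1"
    by (metis insertCI mult_zero_right mod_0)+
  moreover have "0 \<le> (u * z) mod Q" "(u * z) mod Q < Q"
    using z by simp_all
  ultimately show ?thesis
    by linarith
qed

end

section \<open>Trigonometric estimates\<close>

lemma inverse_square_antimono: "0 < a \<Longrightarrow> a \<le> b \<Longrightarrow> 1 / b\<^sup>2 \<le> 1 / a\<^sup>2" for a b :: real
  by (intro divide_left_mono power_mono) (auto intro!: mult_pos_pos)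

lemma mult_cos_le_sin: "0 \<le> u \<Longrightarrow> u \<le> pi \<Longrightarrow> u * cos u \<le> sin u"
proof -
  assume u: "0 \<le> u" "u \<le> pi"
  let ?g = "\<lambda>u. sin u - u * cos u"
  have "?g 0 \<le> ?g u"
  proof (rule DERIV_nonneg_imp_nondecreasing[OF u(1)])
    fix t assume "0 \<le> t" "t \<le> u"
    then have "0 \<le> t * sin t"
      using u by (intro mult_nonneg_nonneg sin_ge_zero) auto
    moreover have "DERIV ?g t :> t * sin t"
      by (auto intro!: derivative_eq_intros simp: algebra_simps)
    ultimately show "\<exists>y. DERIV ?g t :> y \<and> 0 \<le> y"
      by blast
  qed
  then show ?thesis
    by simp
qed

lemma mult_sin_le_mult_sin:
  assumes "0 < s" "s \<le> t" "t \<le> pi"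
  shows "s * sin t \<le> t * sin s"
proof -
  have "sin t / t \<le> sin s / s"
  proof (rule DERIV_nonpos_imp_nonincreasing[OF assms(2)])
    fix u assume u: "s \<le> u" "u \<le> t"
    then have "DERIV (\<lambda>u. sin u / u) u :> (u * cos u - sin u) / u\<^sup>2"
      using assms by (auto intro!: derivative_eq_intros simp: power2_eq_square algebra_simps)
    moreover have "(u * cos u - sin u) / u\<^sup>2 \<le> 0"
      using mult_cos_le_sin[of u] u assms by (intro divide_nonpos_nonneg) auto
    ultimately show "\<exists>y. DERIV (\<lambda>u. sin u / u) u :> y \<and> y \<le> 0"
      by blast
  qed
  with assms show ?thesis
    by (simp add: divide_simps mult.commute)
qed

lemma Jordan_inequality: "0 \<le> y \<Longrightarrow> y \<le> pi / 2 \<Longrightarrow> 2 / pi * y \<le> sin y"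
  using mult_sin_le_mult_sin[of y "pi / 2"] by (cases "y = 0") (auto simp: field_simps)

lemma abs_sin_add_sub_le: "\<bar>sin (a + h) - sin a\<bar> \<le> \<bar>h\<bar>" for a h :: real
proof -
  have "\<bar>sin (a + h) - sin a\<bar> = 2 * \<bar>sin (h / 2)\<bar> * \<bar>cos ((2 * a + h) / 2)\<bar>"
    by (simp add: sin_diff_sin abs_mult algebra_simps)
  also have "\<dots> \<le> 2 * \<bar>h / 2\<bar> * 1"
    using abs_sin_x_le_abs_x[of "h / 2"] abs_cos_le_one by (intro mult_mono) auto
  finally show ?thesis
    by simp
qed

lemma one_sub_sq_div_2_le_cos: "1 - h\<^sup>2 / 2 \<le> cos h" for h :: real
proof -
  have "(sin (h / 2))\<^sup>2 \<le> (h / 2)\<^sup>2"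
    using abs_sin_x_le_abs_x[of "h / 2"] by (metis abs_ge_zero power2_abs power_mono)
  then show ?thesis
    using cos_double_sin[of "h / 2"] by (simp add: power_divide)
qed

lemma inverse_sin_sq_le:
  assumes "0 < A" "A < pi"
  shows "1 / (sin A)\<^sup>2 \<le> pi\<^sup>2 / 4 * (1 / A\<^sup>2 + 1 / (pi - A)\<^sup>2)"
proof -
  have bound: "1 / (sin A)\<^sup>2 \<le> pi\<^sup>2 / 4 * (1 / B\<^sup>2)" if "0 < B" "B \<le> pi / 2" "sin B = sin A" for B
  proof -
    have "1 / (sin A)\<^sup>2 \<le> 1 / (2 / pi * B)\<^sup>2"
      using Jordan_inequality[of B] that by (intro inverse_square_antimono) auto
    then show ?thesis
      by (simp add: power_divide power_mult_distrib)
  qed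
  have "1 / (sin A)\<^sup>2 \<le> pi\<^sup>2 / 4 * (1 / A\<^sup>2) \<or> 1 / (sin A)\<^sup>2 \<le> pi\<^sup>2 / 4 * (1 / (pi - A)\<^sup>2)"
    using bound[of A] bound[of "pi - A"] assms by (cases "A \<le> pi / 2") auto
  moreover have "pi\<^sup>2 / 4 * (1 / A\<^sup>2) \<le> pi\<^sup>2 / 4 * (1 / A\<^sup>2 + 1 / (pi - A)\<^sup>2)"
    and "pi\<^sup>2 / 4 * (1 / (pi - A)\<^sup>2) \<le> pi\<^sup>2 / 4 * (1 / A\<^sup>2 + 1 / (pi - A)\<^sup>2)"
    by (intro mult_left_mono; simp)+
  ultimately show ?thesis
    by linarith
qed

lemma abs_sin_add_int_pi: "\<bar>sin (z + of_int m * pi)\<bar> = \<bar>sin z\<bar>"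
  by (simp add: sin_add abs_mult mult.commute[of _ pi])

lemma cot_add_int_pi: "cot (z + of_int m * pi) = cot z"
  by (simp add: cot_altdef)

lemma abs_sin_minus_one_power_mult: "\<bar>sin ((-1) ^ k * z)\<bar> = \<bar>sin z\<bar>" for z :: real
  by (cases "even k") auto

definition log_sine_defect :: "real \<Rightarrow> real \<Rightarrow> real" where
  "log_sine_defect A h = ln (sin (A + h) / sin A) - sin h * cot A"

lemma sin_add_div_sin: "sin A \<noteq> 0 \<Longrightarrow> sin (A + h) / sin A = cos h + sin h * cot A"
  by (simp add: sin_add cot_def field_simps)

lemma log_sine_defect_eq:
  assumes "0 < A" "0 \<le> h" "A + h < pi"
  shows "log_sine_defect A h = ln (sin (A + h) / sin A) - sin (A + h) / sin A + cos h"
  using assms sin_add_div_sin[of A h] sin_gt_zero[of A] unfolding log_sine_defect_def by simp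

lemma log_sine_defect_nonpos:
  assumes "0 < A" "0 \<le> h" "A + h < pi"
  shows "log_sine_defect A h \<le> 0"
proof -
  have "sin (A + h) / sin A > 0"
    using assms by (intro divide_pos_pos sin_gt_zero) auto
  then have "ln (sin (A + h) / sin A) \<le> sin (A + h) / sin A - 1"
    by (rule ln_le_minus_one)
  then show ?thesis
    using log_sine_defect_eq[OF assms] cos_le_one[of h] by linarith
qed

lemma ln_sub_ge: "v \<ge> 1 / 2 \<Longrightarrow> ln v - v \<ge> - 1 - 2 * (v - 1)\<^sup>2" for v :: real
proof -
  assume v: "v \<ge> 1 / 2"
  have "ln (1 / v) \<le> 1 / v - 1"
    using v by (intro ln_le_minus_one) simp
  then have "ln v \<ge> 1 - 1 / v"
    using v by (simp add: ln_div)
  moreover have "(v - 1)\<^sup>2 / v \<le> 2 * (v - 1)\<^sup>2"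
    using divide_left_mono[of "1 / 2" v "(v - 1)\<^sup>2"] v by simp
  moreover have "1 - 1 / v - v = - 1 - (v - 1)\<^sup>2 / v"
    using v by (simp add: field_simps power2_eq_square)
  ultimately show ?thesis
    by linarith
qed

lemma sin_add_div_sin_sub_one_sq_le:
  assumes "0 < A" "A < pi"
  shows "(sin (A + h) / sin A - 1)\<^sup>2 \<le> pi\<^sup>2 / 4 * ((h / A)\<^sup>2 + (h / (pi - A))\<^sup>2)"
proof -
  have "sin A > 0"
    using assms by (intro sin_gt_zero)
  then have "(sin (A + h) / sin A - 1)\<^sup>2 = (sin (A + h) - sin A)\<^sup>2 * (1 / (sin A)\<^sup>2)"
    by (simp add: field_simps)
  also have "\<dots> \<le> h\<^sup>2 * (pi\<^sup>2 / 4 * (1 / A\<^sup>2 + 1 / (pi - A)\<^sup>2))"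
    using abs_sin_add_sub_le[of A h] inverse_sin_sq_le[OF assms]
    by (intro mult_mono) (auto simp: abs_le_square_iff)
  also have "\<dots> = pi\<^sup>2 / 4 * ((h / A)\<^sup>2 + (h / (pi - A))\<^sup>2)"
    by (simp add: power_divide algebra_simps)
  finally show ?thesis .
qed

lemma sin_add_div_sin_ge:
  assumes "0 < A" "0 \<le> h" "h < pi - A"
  shows "1 - h / (pi - A) \<le> sin (A + h) / sin A"
proof -
  have "(pi - A - h) * sin (pi - A) \<le> (pi - A) * sin (pi - A - h)"
    using assms by (intro mult_sin_le_mult_sin) auto
  then have "(1 - h / (pi - A)) * sin A \<le> sin (A + h)"
    using assms by (simp add: field_simps sin_diff)
  then show ?thesis
    using assms sin_gt_zero[of A] by (simp add: le_divide_eq)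
qed

lemma ln_sin_add_div_sin_ge_of_ge_half:
  assumes "0 < A" "A < pi" "sin (A + h) / sin A \<ge> 1 / 2"
  shows "ln (sin (A + h) / sin A) - sin (A + h) / sin A \<ge> - 1 - 8 * ((h / A)\<^sup>2 + (h / (pi - A))\<^sup>2)"
proof -
  have "pi\<^sup>2 / 4 \<le> 4"
    using pi_less_4 power_mono[of pi 4 2] by simp
  then have "(sin (A + h) / sin A - 1)\<^sup>2 \<le> 4 * ((h / A)\<^sup>2 + (h / (pi - A))\<^sup>2)"
    using sin_add_div_sin_sub_one_sq_le[OF assms(1,2), of h]
      mult_right_mono[of "pi\<^sup>2 / 4" 4 "(h / A)\<^sup>2 + (h / (pi - A))\<^sup>2"] by simp
  then show ?thesis
    using ln_sub_ge[OF assms(3)] by linarith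
qed

lemma ln_sin_add_div_sin_ge_of_less_half:
  assumes A: "0 < A" "A < pi" and h: "0 \<le> h" "h \<le> (1 - c) * (pi - A)" and c: "0 < c" "c < 1"
    and small: "sin (A + h) / sin A < 1 / 2"
  shows "ln (sin (A + h) / sin A) - sin (A + h) / sin A \<ge> - 1 - 4 * ln (1 / c) * (h / (pi - A))\<^sup>2"
proof -
  define v where "v = sin (A + h) / sin A"
  define w where "w = h / (pi - A)"
  have "w \<le> 1 - c"
    unfolding w_def using h A by (simp add: divide_le_eq)
  moreover have "1 - w \<le> v"
    unfolding v_def w_def using A h c by (intro sin_add_div_sin_ge) (auto intro: le_less_trans)
  ultimately have "c \<le> v" "1 / 2 < w"
    using small unfolding v_def by linarith+
  then have "1 \<le> 4 * w\<^sup>2"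
    using power_strict_mono[of "1 / 2" w 2] unfolding power2_eq_square by linarith
  then have "ln (1 / c) \<le> 4 * ln (1 / c) * w\<^sup>2"
    using mult_left_mono[of 1 "4 * w\<^sup>2" "ln (1 / c)"] c by simp
  moreover have "ln c \<le> ln v"
    using \<open>c \<le> v\<close> c by simp
  moreover have "ln (1 / c) = - ln c"
    using c by (simp add: ln_div)
  ultimately show ?thesis
    using small unfolding v_def w_def by linarith
qed

lemma one_le_ln_4_div: "0 < c \<Longrightarrow> c < 1 \<Longrightarrow> 1 \<le> ln (4 / c)" for c :: real
proof -
  assume c: "0 < c" "c < 1"
  have "exp 1 \<le> (4::real)"
    using exp_le by simp
  also have "4 \<le> 4 / c"
    using c by (simp add: le_divide_eq)
  finally show ?thesis
    using c by (simp add: ln_ge_iff)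
qed

lemma log_sine_defect_ge:
  assumes A: "0 < A" "A < pi" and h: "0 \<le> h" "h \<le> (1 - c) * (pi - A)" and c: "0 < c" "c < 1"
  shows "log_sine_defect A h \<ge> - (h\<^sup>2 / 2 + 12 * ln (4 / c) * ((h / A)\<^sup>2 + (h / (pi - A))\<^sup>2))"
proof -
  define S where "S = (h / A)\<^sup>2 + (h / (pi - A))\<^sup>2"
  have "(1 - c) * (pi - A) < pi - A"
    using A c by simp
  with A h have "log_sine_defect A h = ln (sin (A + h) / sin A) - sin (A + h) / sin A + cos h"
    by (intro log_sine_defect_eq) auto
  moreover have "8 * S \<le> 12 * ln (4 / c) * S"
    and "4 * ln (1 / c) * (h / (pi - A))\<^sup>2 \<le> 12 * ln (4 / c) * S"
  proof -
    have l: "1 \<le> ln (4 / c)" "0 \<le> ln (1 / c)" "ln (1 / c) \<le> ln (4 / c)"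
      using one_le_ln_4_div[OF c] c by (simp_all add: divide_simps)
    have S: "0 \<le> S" "(h / (pi - A))\<^sup>2 \<le> S"
      unfolding S_def by simp_all
    then show "8 * S \<le> 12 * ln (4 / c) * S"
      using mult_right_mono[of 1 "ln (4 / c)" S] l by linarith
    have "ln (1 / c) * (h / (pi - A))\<^sup>2 \<le> ln (4 / c) * S"
      using l S by (intro mult_mono) auto
    moreover have "0 \<le> ln (4 / c) * S"
      using l S by simp
    ultimately show "4 * ln (1 / c) * (h / (pi - A))\<^sup>2 \<le> 12 * ln (4 / c) * S"
      by linarith
  qed
  ultimately show ?thesis
    using ln_sin_add_div_sin_ge_of_ge_half[OF A, of h] ln_sin_add_div_sin_ge_of_less_half[OF A h c]
      one_sub_sq_div_2_le_cos[of h] unfolding S_def by fastforce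
qed

section \<open>Sums of inverse squares\<close>

lemma inverse_square_le_telescope:
  fixes n :: real
  assumes "1 \<le> n"
  shows "1 / n\<^sup>2 \<le> 2 / n - 2 / (n + 1)"
proof -
  have "n * (n + 1) \<le> 2 * n\<^sup>2"
    using assms mult_left_mono[OF assms, of n] by (simp add: power2_eq_square algebra_simps)
  then have "1 / n\<^sup>2 \<le> 2 / (n * (n + 1))"
    using assms by (simp add: divide_simps)
  also have "\<dots> = 2 / n - 2 / (n + 1)"
    using assms by (simp add: field_simps)
  finally show ?thesis .
qed

lemma sum_inverse_square_lessThan_le:
  fixes d :: real
  assumes "d > 0"
  shows "(\<Sum>i<N. 1 / (real i + d)\<^sup>2) \<le> 1 / d\<^sup>2 + 2"
proof -
  have "(\<Sum>i<Suc n. 1 / (real i + d)\<^sup>2) \<le> 1 / d\<^sup>2 + 2 - 2 / (real n + 1)" for n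
  proof (induction n)
    case (Suc n)
    have "1 / (real (Suc n) + d)\<^sup>2 \<le> 1 / (real n + 1)\<^sup>2"
      using assms by (intro inverse_square_antimono) auto
    also have "\<dots> \<le> 2 / (real n + 1) - 2 / (real n + 1 + 1)"
      by (intro inverse_square_le_telescope) simp
    finally show ?case
      using Suc.IH by simp
  qed simp
  from this[of "N - 1"] show ?thesis
    using assms by (cases N) (auto intro: order_trans)
qed

lemma sum_inverse_square_le:
  fixes g :: "'a \<Rightarrow> nat" and f :: "'a \<Rightarrow> real"
  assumes "finite I" "inj_on g I" "d > 0" "\<And>n. n \<in> I \<Longrightarrow> real (g n) + d \<le> f n"
  shows "(\<Sum>n\<in>I. 1 / (f n)\<^sup>2) \<le> 1 / d\<^sup>2 + 2"
proof -
  obtain N where "g ` I \<subseteq> {..<N}"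
    using assms(1) finite_nat_set_iff_bounded by (metis finite_imageI lessThan_iff subsetI)
  have "(\<Sum>n\<in>I. 1 / (f n)\<^sup>2) \<le> (\<Sum>n\<in>I. 1 / (real (g n) + d)\<^sup>2)"
    using assms(3,4) by (intro sum_mono inverse_square_antimono) (auto intro: add_nonneg_pos)
  also have "\<dots> = (\<Sum>j\<in>g ` I. 1 / (real j + d)\<^sup>2)"
    using assms(2) by (simp add: sum.reindex)
  also have "\<dots> \<le> (\<Sum>j<N. 1 / (real j + d)\<^sup>2)"
    using \<open>g ` I \<subseteq> {..<N}\<close> by (intro sum_mono2) auto
  also have "\<dots> \<le> 1 / d\<^sup>2 + 2"
    using assms(3) by (rule sum_inverse_square_lessThan_le)
  finally show ?thesis .
qed

lemma inverse_square_bound_arith: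
  fixes u l T :: real
  assumes "1 \<le> 16 * u" "1 \<le> l" "0 \<le> T"
  shows "8 * T + 24 * l * T * (u + 2) \<le> 920 * l * T * u"
proof -
  have "l * T \<le> 16 * (l * T * u)"
    using mult_left_mono[OF assms(1), of "l * T"] assms by (simp add: ac_simps)
  moreover have "T \<le> l * T"
    using assms mult_right_mono[of 1 l T] by simp
  ultimately show ?thesis
    by (simp add: algebra_simps)
qed

section \<open>The sum \<open>B*\<close>\<close>

locale Bstar_hypotheses =
  fixes \<alpha> :: real and k M :: nat and x c :: real
  assumes irrational: "\<alpha> \<notin> \<rat>"
    and k_ge_1: "k \<ge> 1"
    and M_less: "int M < cf_q \<alpha> k"
    and x_gt: "-2 < x"
    and x_le: "x \<le> 2 - of_int (cf_q \<alpha> k) * dist_int (of_int (cf_q \<alpha> k) * \<alpha>) / (1 - c)"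
    and c_pos: "0 < c"
    and c_less_1: "c < 1"
begin

abbreviation "Q \<equiv> cf_q \<alpha> k"
abbreviation "P \<equiv> cf_p \<alpha> k"
abbreviation "q \<equiv> real_of_int Q"
abbreviation "e \<equiv> dist_int (q * \<alpha>)"
abbreviation "I \<equiv> idx_set \<alpha> k M"

definition res :: "nat \<Rightarrow> int" where
  "res n = ((-1) ^ k * P * int n) mod Q"

definition quo :: "nat \<Rightarrow> int" where
  "quo n = ((-1) ^ k * P * int n) div Q"

definition ang :: "nat \<Rightarrow> real" where
  "ang n = pi * (of_int (res n) + x) / q"

definition step :: "nat \<Rightarrow> real" where
  "step n = pi * real n * e / q"

lemma q_ge_1: "q \<ge> 1"
  using cf_q_pos[OF irrational] by simp

lemma e_pos: "e > 0"
  using k_ge_1 dist_int_cf_q_pos[OF irrational, of "k - 1"] by (cases k) auto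

lemma cf_q_mul_sub: "q * \<alpha> - of_int P = (-1) ^ k * e"
  using k_ge_1 cf_q_mul_sub_cf_p[OF irrational, of "k - 1"] by (cases k) auto

lemma e_mult_cf_a_le: "e * q * of_int (cf_a \<alpha> (k + 1)) \<le> 1"
  using k_ge_1 dist_int_cf_q_mult_cf_a_le[OF irrational, of "k - 1"] by (cases k) auto

lemma x_lt_2: "x < 2"
proof -
  have "q * e / (1 - c) > 0"
    using q_ge_1 e_pos c_less_1 by simp
  then show ?thesis
    using x_le by simp
qed

lemma cf_q_pred_bounds: "1 \<le> cf_q \<alpha> (k - 1)" "cf_q \<alpha> (k - 1) \<le> Q"
  using k_ge_1 cf_q_pos[OF irrational] cf_q_le_Suc[OF irrational, of "k - 1"] by (cases k; simp)+

lemma sign_cf_p_inverse: "Q dvd (-1) ^ k * P * cf_q \<alpha> (k - 1) + 1"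
proof -
  obtain j where k: "k = Suc j"
    using k_ge_1 by (cases k) auto
  have det: "P * cf_q \<alpha> j = (-1) ^ j + cf_p \<alpha> j * Q"
    using cf_det[of \<alpha> j] k by simp
  have "(-1) ^ k * P * cf_q \<alpha> j = (-1) ^ k * (P * cf_q \<alpha> j)"
    by (simp only: mult.assoc)
  also have "\<dots> = (-1) ^ Suc j * (-1) ^ j + Q * ((-1) ^ k * cf_p \<alpha> j)"
    unfolding det by (simp add: k algebra_simps)
  also have "(-1) ^ Suc j * (-1) ^ j = (-1 :: int)"
    by (simp flip: power_mult_distrib)
  finally have "(-1) ^ k * P * cf_q \<alpha> (k - 1) + 1 = Q * ((-1) ^ k * cf_p \<alpha> j)"
    using k by simp
  then show ?thesis
    by (metis dvd_triv_left)
qed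

lemma idx_set_bounds:
  assumes "n \<in> I"
  shows "1 \<le> int n" "int n < Q" "int n \<noteq> cf_q \<alpha> (k - 1)" "int n \<noteq> Q - cf_q \<alpha> (k - 1)"
  using assms M_less unfolding idx_set_def by auto

lemma res_bounds: "n \<in> I \<Longrightarrow> 2 \<le> res n \<and> res n \<le> Q - 2"
  unfolding res_def using idx_set_bounds cf_q_pred_bounds
  by (intro mod_mult_inverse_bounds[OF sign_cf_p_inverse]) auto

lemma inj_on_res: "inj_on res I"
proof (rule inj_onI)
  fix n n' assume "n \<in> I" "n' \<in> I" "res n = res n'"
  then have "int n = int n'"
    using inj_on_mod_mult_inverse[OF sign_cf_p_inverse] idx_set_bounds
    unfolding res_def by (auto dest: inj_onD)
  then show "n = n'"
    by simp
qed

lemma sign_cf_p_mult_eq: "(-1) ^ k * of_int P * real n = of_int (res n) + q * of_int (quo n)"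
proof -
  have "(-1) ^ k * P * int n = Q * quo n + res n"
    unfolding res_def quo_def by simp
  then have "real_of_int ((-1) ^ k * P * int n) = real_of_int (Q * quo n + res n)"
    by (rule arg_cong)
  then show ?thesis
    by simp
qed

lemma angle_shift_eq:
  "pi * (of_int (res n) + q * of_int (quo n) + y) / q = pi * (of_int (res n) + y) / q + of_int (quo n) * pi"
  using q_ge_1 by (simp add: field_simps)

lemma angle_cot_eq: "pi * (real n * (-1) ^ k * of_int P + x) / q = ang n + of_int (quo n) * pi"
proof -
  have "real n * (-1) ^ k * of_int P = of_int (res n) + q * of_int (quo n)"
    using sign_cf_p_mult_eq[of n] by (simp add: ac_simps)
  then show ?thesis
    unfolding ang_def by (simp add: angle_shift_eq)
qed

lemma angle_alpha_eq:
  "pi * (real n * \<alpha> + (-1) ^ k * x / q) = (-1) ^ k * (ang n + step n + of_int (quo n) * pi)"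
proof -
  \<comment> \<open>\<open>e\<close> mentions \<open>\<alpha>\<close>; naming it keeps the substitution for \<open>\<alpha>\<close> from looping.\<close>
  define \<epsilon> where "\<epsilon> = e"
  have alpha: "\<alpha> = (of_int P + (-1) ^ k * \<epsilon>) / q"
    using cf_q_mul_sub q_ge_1 unfolding \<epsilon>_def[symmetric] by (simp add: field_simps)
  have "pi * (real n * \<alpha> + (-1) ^ k * x / q)
      = (-1) ^ k * (pi * ((-1) ^ k * of_int P * real n + real n * \<epsilon> + x) / q)"
    by (subst alpha) (use q_ge_1 in \<open>cases "even k"; simp add: field_simps\<close>)
  also have "\<dots> = (-1) ^ k * (ang n + step n + of_int (quo n) * pi)"
    unfolding sign_cf_p_mult_eq ang_def step_def \<epsilon>_def using q_ge_1 by (simp add: field_simps)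
  finally show ?thesis .
qed

lemma angle_convergent_eq:
  "pi * (real n * (of_int P / q) + (-1) ^ k * x / q) = (-1) ^ k * (ang n + of_int (quo n) * pi)"
proof -
  have "pi * (real n * (of_int P / q) + (-1) ^ k * x / q)
      = (-1) ^ k * (pi * ((-1) ^ k * of_int P * real n + x) / q)"
    using q_ge_1 by (cases "even k") (simp_all add: field_simps)
  then show ?thesis
    unfolding sign_cf_p_mult_eq ang_def by (simp add: angle_shift_eq)
qed

lemma ang_pos: "n \<in> I \<Longrightarrow> 0 < ang n"
  using res_bounds[of n] x_gt q_ge_1 unfolding ang_def by simp

lemma pi_sub_ang_eq: "pi - ang n = pi * (q - of_int (res n) - x) / q"
  using q_ge_1 unfolding ang_def by (simp add: field_simps)

lemma step_nonneg: "0 \<le> step n"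
  using e_pos q_ge_1 unfolding step_def by simp

lemma step_le: "n \<in> I \<Longrightarrow> step n \<le> (1 - c) * (pi - ang n)"
proof -
  assume n: "n \<in> I"
  have "real n * e \<le> q * e"
    using idx_set_bounds(2)[OF n] e_pos by (simp add: mult_right_mono)
  also have "\<dots> \<le> (1 - c) * (2 - x)"
    using x_le c_less_1 by (simp add: field_simps)
  also have "\<dots> \<le> (1 - c) * (q - of_int (res n) - x)"
    using res_bounds[OF n] c_less_1 by (intro mult_left_mono) auto
  finally have "pi * (real n * e) / q \<le> pi * ((1 - c) * (q - of_int (res n) - x)) / q"
    using q_ge_1 by (intro divide_right_mono mult_left_mono) auto
  then show ?thesis
    unfolding step_def pi_sub_ang_eq by (simp add: algebra_simps)
qed

lemma pi_sub_ang_pos: "n \<in> I \<Longrightarrow> 0 < pi - ang n"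
  using res_bounds[of n] x_lt_2 q_ge_1 unfolding pi_sub_ang_eq by simp

lemma ang_add_step_lt_pi: "n \<in> I \<Longrightarrow> ang n + step n < pi"
  using step_le[of n] mult_pos_pos[OF c_pos pi_sub_ang_pos[of n]] by (simp add: algebra_simps)

lemma finite_idx_set: "finite I"
  unfolding idx_set_def by simp

lemma sin_ang_pos: "n \<in> I \<Longrightarrow> 0 < sin (ang n)"
  using ang_pos pi_sub_ang_pos by (intro sin_gt_zero) auto

lemma sin_ang_add_step_pos: "n \<in> I \<Longrightarrow> 0 < sin (ang n + step n)"
  using ang_pos ang_add_step_lt_pi step_nonneg by (intro sin_gt_zero) (auto intro: add_pos_nonneg)

lemma Bstar_eq_sum: "Bstar \<alpha> k M x = (\<Sum>n\<in>I. log_sine_defect (ang n) (step n))"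
proof -
  have alpha_factor:
    "\<bar>2 * sin (pi * (real n * \<alpha> + (-1) ^ k * x / q))\<bar> = 2 * sin (ang n + step n)"
    if "n \<in> I" for n
    using sin_ang_add_step_pos[OF that]
    unfolding angle_alpha_eq abs_mult abs_sin_minus_one_power_mult abs_sin_add_int_pi by simp
  have convergent_factor:
    "\<bar>2 * sin (pi * (real n * (of_int P / q) + (-1) ^ k * x / q))\<bar> = 2 * sin (ang n)"
    if "n \<in> I" for n
    using sin_ang_pos[OF that]
    unfolding angle_convergent_eq abs_mult abs_sin_minus_one_power_mult abs_sin_add_int_pi by simp
  have "Pstar \<alpha> k M \<alpha> ((-1) ^ k * x / q) / Pstar \<alpha> k M (of_int P / q) ((-1) ^ k * x / q)
      = (\<Prod>n\<in>I. 2 * sin (ang n + step n)) / (\<Prod>n\<in>I. 2 * sin (ang n))"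
    unfolding Pstar_def using alpha_factor convergent_factor by (simp cong: prod.cong)
  also have "\<dots> = (\<Prod>n\<in>I. sin (ang n + step n) / sin (ang n))"
    by (simp add: prod_dividef[symmetric])
  finally have "ln (Pstar \<alpha> k M \<alpha> ((-1) ^ k * x / q) / Pstar \<alpha> k M (of_int P / q) ((-1) ^ k * x / q))
      = ln (\<Prod>n\<in>I. sin (ang n + step n) / sin (ang n))"
    by simp
  also have "\<dots> = (\<Sum>n\<in>I. ln (sin (ang n + step n) / sin (ang n)))"
    using finite_idx_set sin_ang_pos sin_ang_add_step_pos
    by (intro ln_prod) (auto simp: less_imp_neq[symmetric])
  moreover have "sin (pi * real n * e / q) * cot (pi * (real n * (-1) ^ k * of_int P + x) / q)
      = sin (step n) * cot (ang n)" for n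
    unfolding angle_cot_eq cot_add_int_pi step_def ..
  ultimately show ?thesis
    unfolding Bstar_def Let_def log_sine_defect_def by (simp add: sum_subtractf)
qed

lemma Bstar_nonpos: "Bstar \<alpha> k M x \<le> 0"
  unfolding Bstar_eq_sum
  using ang_pos ang_add_step_lt_pi step_nonneg by (intro sum_nonpos log_sine_defect_nonpos) auto

lemma inj_on_nat_res:
  assumes "inj f" "\<And>n. n \<in> I \<Longrightarrow> 0 \<le> f (res n)"
  shows "inj_on (\<lambda>n. nat (f (res n))) I"
proof (rule inj_onI)
  fix n n' assume "n \<in> I" "n' \<in> I" "nat (f (res n)) = nat (f (res n'))"
  then have "res n = res n'"
    using assms by (simp add: eq_nat_nat_iff inj_eq)
  with \<open>n \<in> I\<close> \<open>n' \<in> I\<close> show "n = n'"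
    using inj_on_res by (auto dest: inj_onD)
qed

lemma sum_inverse_square_res_le:
  "(\<Sum>n\<in>I. 1 / (of_int (res n) + x)\<^sup>2) \<le> 1 / (2 - \<bar>x\<bar>)\<^sup>2 + 2"
proof (rule sum_inverse_square_le[OF finite_idx_set, where g = "\<lambda>n. nat (res n - 2)"])
  show "inj_on (\<lambda>n. nat (res n - 2)) I"
    using res_bounds by (intro inj_on_nat_res[where f = "\<lambda>r. r - 2"]) (auto simp: inj_def)
  show "real (nat (res n - 2)) + (2 - \<bar>x\<bar>) \<le> of_int (res n) + x" if "n \<in> I" for n
    using res_bounds[OF that] by simp
qed (use x_gt x_lt_2 in simp)

lemma sum_inverse_square_res_compl_le:
  "(\<Sum>n\<in>I. 1 / (q - of_int (res n) - x)\<^sup>2) \<le> 1 / (2 - \<bar>x\<bar>)\<^sup>2 + 2"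
proof (rule sum_inverse_square_le[OF finite_idx_set, where g = "\<lambda>n. nat (Q - 2 - res n)"])
  show "inj_on (\<lambda>n. nat (Q - 2 - res n)) I"
    using res_bounds by (intro inj_on_nat_res[where f = "\<lambda>r. Q - 2 - r"]) (auto simp: inj_def)
  show "real (nat (Q - 2 - res n)) + (2 - \<bar>x\<bar>) \<le> q - of_int (res n) - x" if "n \<in> I" for n
    using res_bounds[OF that] by simp
qed (use x_gt x_lt_2 in simp)

lemma log_sine_defect_step_ge:
  assumes n: "n \<in> I"
  shows "log_sine_defect (ang n) (step n) \<ge>
    - (8 * e\<^sup>2 + 12 * ln (4 / c) *
        ((q * e)\<^sup>2 * (1 / (of_int (res n) + x)\<^sup>2 + 1 / (q - of_int (res n) - x)\<^sup>2)))"
proof -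
  have ne: "(real n * e)\<^sup>2 \<le> (q * e)\<^sup>2"
    using idx_set_bounds(2)[OF n] e_pos by (intro power_mono) auto
  have "step n / ang n = real n * e / (of_int (res n) + x)"
    using q_ge_1 unfolding step_def ang_def by simp
  then have ratio1: "(step n / ang n)\<^sup>2 \<le> (q * e)\<^sup>2 * (1 / (of_int (res n) + x)\<^sup>2)"
    using ne by (simp add: power_divide divide_right_mono)
  have "step n / (pi - ang n) = real n * e / (q - of_int (res n) - x)"
    using q_ge_1 unfolding step_def pi_sub_ang_eq by simp
  then have ratio2: "(step n / (pi - ang n))\<^sup>2 \<le> (q * e)\<^sup>2 * (1 / (q - of_int (res n) - x)\<^sup>2)"
    using ne by (simp add: power_divide divide_right_mono)
  have "step n \<le> 4 * e"
  proof -
    have "real n \<le> q"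
      using idx_set_bounds(2)[OF n] by simp
    then have "step n \<le> pi * e"
      using q_ge_1 e_pos unfolding step_def by (simp add: field_simps mult_left_mono)
    then show ?thesis
      using mult_right_mono[OF less_imp_le[OF pi_less_4], of e] e_pos by linarith
  qed
  then have "(step n)\<^sup>2 / 2 \<le> 8 * e\<^sup>2"
    using step_nonneg[of n] power_mono[of "step n" "4 * e" 2] by (simp add: power_mult_distrib)
  moreover have "12 * ln (4 / c) * ((step n / ang n)\<^sup>2 + (step n / (pi - ang n))\<^sup>2)
      \<le> 12 * ln (4 / c) *
        ((q * e)\<^sup>2 * (1 / (of_int (res n) + x)\<^sup>2 + 1 / (q - of_int (res n) - x)\<^sup>2))"
    using add_mono[OF ratio1 ratio2] one_le_ln_4_div[OF c_pos c_less_1]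
    by (intro mult_left_mono) (auto simp: distrib_left)
  ultimately show ?thesis
    using log_sine_defect_ge[OF ang_pos[OF n] _ step_nonneg step_le[OF n] c_pos c_less_1]
      ang_add_step_lt_pi[OF n] step_nonneg[of n] by linarith
qed

lemma card_idx_set_le: "real (card I) \<le> q"
proof -
  have "card I \<le> card {1..M}"
    unfolding idx_set_def by (intro card_mono) auto
  then show ?thesis
    using M_less by simp
qed

lemma q_e_sq_le: "(q * e)\<^sup>2 \<le> 1 / (of_int (cf_a \<alpha> (k + 1)))\<^sup>2"
proof -
  have a: "real_of_int (cf_a \<alpha> (k + 1)) \<ge> 1"
    using cf_a_pos[OF irrational, of "k + 1"] by simp
  have "(q * e * of_int (cf_a \<alpha> (k + 1)))\<^sup>2 \<le> 1\<^sup>2"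
    using e_mult_cf_a_le e_pos q_ge_1 a by (intro power_mono) (auto simp: mult.commute)
  with a show ?thesis
    by (simp add: power_mult_distrib divide_simps)
qed

lemma sum_log_sine_defect_ge:
  "(\<Sum>n\<in>I. log_sine_defect (ang n) (step n)) \<ge>
    - (8 * (q * e)\<^sup>2 + 24 * ln (4 / c) * (q * e)\<^sup>2 * (1 / (2 - \<bar>x\<bar>)\<^sup>2 + 2))"
proof -
  let ?U = "\<lambda>n. 1 / (of_int (res n) + x)\<^sup>2" and ?V = "\<lambda>n. 1 / (q - of_int (res n) - x)\<^sup>2"
  have "(\<Sum>n\<in>I. log_sine_defect (ang n) (step n))
      \<ge> - (\<Sum>n\<in>I. 8 * e\<^sup>2 + 12 * ln (4 / c) * ((q * e)\<^sup>2 * (?U n + ?V n)))"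
    using log_sine_defect_step_ge by (simp add: sum_negf[symmetric] sum_mono)
  moreover have "(\<Sum>n\<in>I. 8 * e\<^sup>2 + 12 * ln (4 / c) * ((q * e)\<^sup>2 * (?U n + ?V n)))
      = 8 * e\<^sup>2 * real (card I) + 12 * ln (4 / c) * (q * e)\<^sup>2 * (sum ?U I + sum ?V I)"
    by (simp add: sum.distrib sum_distrib_left algebra_simps)
  moreover have "e\<^sup>2 * real (card I) \<le> (q * e)\<^sup>2"
  proof -
    have "q \<le> q\<^sup>2"
      using mult_right_mono[of 1 q q] q_ge_1 by (simp add: power2_eq_square)
    then have "real (card I) \<le> q\<^sup>2"
      using card_idx_set_le by linarith
    then have "e\<^sup>2 * real (card I) \<le> e\<^sup>2 * q\<^sup>2"
      by (rule mult_left_mono) simp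
    then show ?thesis
      by (simp add: power_mult_distrib mult.commute)
  qed
  moreover have "12 * ln (4 / c) * (q * e)\<^sup>2 * (sum ?U I + sum ?V I)
      \<le> 12 * ln (4 / c) * (q * e)\<^sup>2 * (2 * (1 / (2 - \<bar>x\<bar>)\<^sup>2 + 2))"
    using sum_inverse_square_res_le sum_inverse_square_res_compl_le
      one_le_ln_4_div[OF c_pos c_less_1] by (intro mult_left_mono) auto
  ultimately show ?thesis
    by (simp add: algebra_simps)
qed

lemma Bstar_ge:
  "- 920 * ln (4 / c) / ((2 - \<bar>x\<bar>)\<^sup>2 * (of_int (cf_a \<alpha> (k + 1)))\<^sup>2) \<le> Bstar \<alpha> k M x"
proof -
  define u where "u = 1 / (2 - \<bar>x\<bar>)\<^sup>2"
  have "(2 - \<bar>x\<bar>)\<^sup>2 \<le> 4\<^sup>2"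
    using x_gt x_lt_2 by (intro power_mono) auto
  then have "1 \<le> 16 * u"
    unfolding u_def using x_gt x_lt_2 by (simp add: field_simps)
  have l: "1 \<le> ln (4 / c)"
    using c_pos c_less_1 by (rule one_le_ln_4_div)
  have "920 * ln (4 / c) * (q * e)\<^sup>2 * u
      \<le> 920 * ln (4 / c) * (1 / (of_int (cf_a \<alpha> (k + 1)))\<^sup>2) * u"
    using q_e_sq_le l \<open>1 \<le> 16 * u\<close> by (intro mult_right_mono mult_left_mono) auto
  then have "- (920 * ln (4 / c) * (1 / (of_int (cf_a \<alpha> (k + 1)))\<^sup>2) * u)
      \<le> - (920 * ln (4 / c) * (q * e)\<^sup>2 * u)"
    by linarith
  also have "\<dots> \<le> - (8 * (q * e)\<^sup>2 + 24 * ln (4 / c) * (q * e)\<^sup>2 * (u + 2))"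
    using inverse_square_bound_arith[OF \<open>1 \<le> 16 * u\<close> l, of "(q * e)\<^sup>2"] by simp
  also have "\<dots> \<le> Bstar \<alpha> k M x"
    unfolding Bstar_eq_sum u_def by (rule sum_log_sine_defect_ge)
  finally show ?thesis
    unfolding u_def by (simp add: field_simps)
qed

end

theorem proposition7:
  shows "\<exists>C>0. \<forall>(\<alpha>::real) (k::nat) (M::nat) (x::real) (c::real).
    \<alpha> \<notin> \<rat> \<and> k \<ge> 1 \<and> int M < cf_q \<alpha> k \<and>
    of_int (cf_q \<alpha> k) * dist_int (of_int (cf_q \<alpha> k) * \<alpha>) \<le> 2 * (1 - c) \<and>
    -2 < x \<and> x \<le> 2 - of_int (cf_q \<alpha> k) * dist_int (of_int (cf_q \<alpha> k) * \<alpha>) / (1 - c) \<and>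
    100 / (of_int (cf_q \<alpha> k))\<^sup>2 \<le> c \<and> c < 1
    \<longrightarrow>
    - C * ln (4 / c) / ((2 - \<bar>x\<bar>)\<^sup>2 * (of_int (cf_a \<alpha> (k + 1)))\<^sup>2) \<le> Bstar \<alpha> k M x \<and>
    Bstar \<alpha> k M x \<le> C / ((of_int (cf_a \<alpha> (k + 1)))\<^sup>2 * of_int (cf_q \<alpha> k))"
proof (intro exI[of _ 920] conjI allI impI)
  fix \<alpha> x c :: real and k M :: nat
  assume hyps: "\<alpha> \<notin> \<rat> \<and> k \<ge> 1 \<and> int M < cf_q \<alpha> k \<and>
    of_int (cf_q \<alpha> k) * dist_int (of_int (cf_q \<alpha> k) * \<alpha>) \<le> 2 * (1 - c) \<and>
    -2 < x \<and> x \<le> 2 - of_int (cf_q \<alpha> k) * dist_int (of_int (cf_q \<alpha> k) * \<alpha>) / (1 - c) \<and>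
    100 / (of_int (cf_q \<alpha> k))\<^sup>2 \<le> c \<and> c < 1"
  have "0 < 100 / (real_of_int (cf_q \<alpha> k))\<^sup>2"
    using hyps cf_q_pos[of \<alpha> k] by simp
  with hyps have "0 < c"
    by linarith
  with hyps interpret Bstar_hypotheses \<alpha> k M x c
    by unfold_locales auto
  show "- 920 * ln (4 / c) / ((2 - \<bar>x\<bar>)\<^sup>2 * (of_int (cf_a \<alpha> (k + 1)))\<^sup>2) \<le> Bstar \<alpha> k M x"
    by (rule Bstar_ge)
  have "0 \<le> (920::real) / ((of_int (cf_a \<alpha> (k + 1)))\<^sup>2 * of_int (cf_q \<alpha> k))"
    using q_ge_1 by simp
  with Bstar_nonpos show "Bstar \<alpha> k M x \<le> 920 / ((of_int (cf_a \<alpha> (k + 1)))\<^sup>2 * of_int (cf_q \<alpha> k))"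
    by linarith
qed simp

end
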